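(* Let $\lambda>1$, suppose $(P_1)$ is feasible, and let $y^*$ be an optimal solution to $\max_{y\in\mathbb{R}^{\mathcal{S}}_{\ge0}}g_\lambda(y)$. Then $\sum_{S\in\mathcal{S}}b_Sy^*_S\le\frac{\mathrm{OPT}(1)-\mathrm{OPT}(\lambda)}{\lambda-1}$.
   Context: Setting: $G=(V,E)$ undirected connected graph, costs $c_e\ge0$, a chain $\mathcal{S}$ of node sets $S_1\subsetneq\dots\subsetneq S_\ell\subsetneq V$, integers $b_S$. $E(S)$ = edges with both ends in $S$, $\delta(S)$ = edges with exactly one end in $S$, $z(F)=\sum_{e\in F}z_e$. $P_{ST}(G)=\{x\in\mathbb{R}^E_{\ge0}: x(E(S))\le|S|-1\ \forall\emptyset\ne S\subsetneq V,\ x(E)=|V|-1\}$. For $\lambda\ge1$, $(P_\lambda)$: minimize $\sum_ec_ex_e$ over $x\in P_{ST}(G)$ with $x(\delta(S))\le\lambda b_S$ for all $S\in\mathcal{S}$; $\mathrm{OPT}(\lambda)$ is its optimal value. $g_\lambda(y)=\min_{x\in P_{ST}(G)}\big(\sum_ec_ex_e+\sum_{S\in\mathcal{S}}(x(\delta(S))-\lambda b_S)y_S\big)$ for $y\in\mathbb{R}^{\mathcal{S}}_{\ge0}$. *)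

theory Defs
  imports Complex_Main
begin

definition graph_ok :: "'v set \<Rightarrow> 'v set set \<Rightarrow> bool" where
  "graph_ok V E \<longleftrightarrow> finite V \<and> (\<forall>e\<in>E. e \<subseteq> V \<and> card e = 2)"

definition connected_graph :: "'v set \<Rightarrow> 'v set set \<Rightarrow> bool" where
  "connected_graph V E \<longleftrightarrow> graph_ok V E \<and> V \<noteq> {} \<and>
     (\<forall>u\<in>V. \<forall>v\<in>V. (\<lambda>a b. {a, b} \<in> E)\<^sup>*\<^sup>* u v)"

definition inner_edges :: "'v set set \<Rightarrow> 'v set \<Rightarrow> 'v set set" where
  "inner_edges E S = {e\<in>E. e \<subseteq> S}"

definition cut_edges :: "'v set set \<Rightarrow> 'v set \<Rightarrow> 'v set set" where
  "cut_edges E S = {e\<in>E. card (e \<inter> S) = 1}"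

definition is_chain_family :: "'v set \<Rightarrow> 'v set set \<Rightarrow> bool" where
  "is_chain_family V \<S> \<longleftrightarrow> finite \<S> \<and> (\<forall>S\<in>\<S>. S \<subset> V) \<and>
     (\<forall>S\<in>\<S>. \<forall>T\<in>\<S>. S \<subseteq> T \<or> T \<subseteq> S)"

definition P_ST :: "'v set \<Rightarrow> 'v set set \<Rightarrow> ('v set \<Rightarrow> real) set" where
  "P_ST V E = {x. (\<forall>e\<in>E. x e \<ge> 0) \<and>
     (\<forall>S. S \<noteq> {} \<and> S \<subset> V \<longrightarrow> sum x (inner_edges E S) \<le> real (card S) - 1) \<and>
     sum x E = real (card V) - 1}"

definition lin_cost :: "'v set set \<Rightarrow> ('v set \<Rightarrow> real) \<Rightarrow> ('v set \<Rightarrow> real) \<Rightarrow> real" where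
  "lin_cost E c x = (\<Sum>e\<in>E. c e * x e)"

definition feas :: "'v set \<Rightarrow> 'v set set \<Rightarrow> 'v set set \<Rightarrow> ('v set \<Rightarrow> int) \<Rightarrow> real
    \<Rightarrow> ('v set \<Rightarrow> real) set" where
  "feas V E \<S> b lam = {x \<in> P_ST V E. \<forall>S\<in>\<S>. sum x (cut_edges E S) \<le> lam * real_of_int (b S)}"

definition OPT :: "'v set \<Rightarrow> 'v set set \<Rightarrow> ('v set \<Rightarrow> real) \<Rightarrow> 'v set set \<Rightarrow> ('v set \<Rightarrow> int)
    \<Rightarrow> real \<Rightarrow> real" where
  "OPT V E c \<S> b lam = Inf (lin_cost E c ` feas V E \<S> b lam)"

definition g_lag :: "'v set \<Rightarrow> 'v set set \<Rightarrow> ('v set \<Rightarrow> real) \<Rightarrow> 'v set set \<Rightarrow> ('v set \<Rightarrow> int)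
    \<Rightarrow> real \<Rightarrow> ('v set \<Rightarrow> real) \<Rightarrow> real" where
  "g_lag V E c \<S> b lam y = Inf ((\<lambda>x. lin_cost E c x +
      (\<Sum>S\<in>\<S>. (sum x (cut_edges E S) - lam * real_of_int (b S)) * y S)) ` P_ST V E)"

end

theory Submission
  imports Defs "HOL-Analysis.Analysis"
begin

text \<open>For multipliers \<open>y \<ge> 0\<close> and any \<open>x\<close> feasible for \<open>(P\<^sub>1)\<close> we have
  \<open>g\<^sub>\<lambda>(y) \<le> c x + \<Sum>\<^sub>S (x(\<delta>(S)) - \<lambda> b\<^sub>S) y\<^sub>S \<le> c x - (\<lambda> - 1) \<Sum>\<^sub>S b\<^sub>S y\<^sub>S\<close>,
  so the claim reduces to strong duality \<open>g\<^sub>\<lambda>(y\<^sup>*) \<ge> OPT(\<lambda>)\<close>. A Slater point need not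
  exist (\<open>b\<^sub>S\<close> may be \<open>0\<close>), so strong duality is proved directly: restricted to
  coordinates in \<open>E\<close> the spanning tree polytope is compact and convex, and separating the
  compact convex image \<open>{(x(\<delta>(S)) - \<lambda> b\<^sub>S, c x)}\<close> from the quadrant below
  \<open>(0, OPT(\<lambda>) - \<epsilon>)\<close> yields \<open>\<epsilon>\<close>-optimal multipliers, one constraint at a time.\<close>

text \<open>\<open>'e \<Rightarrow> real\<close> carries the product topology but no vector space instance, so
  convexity and affinity are spelled out pointwise.\<close>

definition fun_convex :: "('e \<Rightarrow> real) set \<Rightarrow> bool" where
  "fun_convex X \<longleftrightarrow> (\<forall>x\<in>X. \<forall>x'\<in>X. \<forall>u. 0 \<le> u \<and> u \<le> 1 \<longrightarrow> (\<lambda>e. u * x e + (1 - u) * x' e) \<in> X)"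

definition fun_affine_on :: "('e \<Rightarrow> real) set \<Rightarrow> (('e \<Rightarrow> real) \<Rightarrow> real) \<Rightarrow> bool" where
  "fun_affine_on X f \<longleftrightarrow> (\<forall>x\<in>X. \<forall>x'\<in>X. \<forall>u. 0 \<le> u \<and> u \<le> 1 \<longrightarrow>
      f (\<lambda>e. u * x e + (1 - u) * x' e) = u * f x + (1 - u) * f x')"

lemma fun_affine_on_subset: "fun_affine_on X f \<Longrightarrow> Y \<subseteq> X \<Longrightarrow> fun_affine_on Y f"
  unfolding fun_affine_on_def by blast

lemma fun_affine_on_const: "fun_affine_on X (\<lambda>x. c)"
  unfolding fun_affine_on_def by (simp add: algebra_simps)

lemma fun_affine_on_coordinate: "fun_affine_on X (\<lambda>x. x e)"
  unfolding fun_affine_on_def by simp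

lemma fun_affine_on_add:
  assumes "fun_affine_on X f" and "fun_affine_on X g"
  shows "fun_affine_on X (\<lambda>x. f x + g x)"
  unfolding fun_affine_on_def
proof (intro ballI allI impI)
  fix x x' u assume "x \<in> X" "x' \<in> X" "0 \<le> u \<and> u \<le> (1::real)"
  with assms show "f (\<lambda>e. u * x e + (1 - u) * x' e) + g (\<lambda>e. u * x e + (1 - u) * x' e) =
      u * (f x + g x) + (1 - u) * (f x' + g x')"
    unfolding fun_affine_on_def by (simp add: distrib_left)
qed

lemma fun_affine_on_diff:
  assumes "fun_affine_on X f" and "fun_affine_on X g"
  shows "fun_affine_on X (\<lambda>x. f x - g x)"
  unfolding fun_affine_on_def
proof (intro ballI allI impI)
  fix x x' u assume "x \<in> X" "x' \<in> X" "0 \<le> u \<and> u \<le> (1::real)"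
  with assms show "f (\<lambda>e. u * x e + (1 - u) * x' e) - g (\<lambda>e. u * x e + (1 - u) * x' e) =
      u * (f x - g x) + (1 - u) * (f x' - g x')"
    unfolding fun_affine_on_def by (simp add: right_diff_distrib)
qed

lemma fun_affine_on_cmult:
  assumes "fun_affine_on X f"
  shows "fun_affine_on X (\<lambda>x. c * f x)"
  unfolding fun_affine_on_def
proof (intro ballI allI impI)
  fix x x' u assume "x \<in> X" "x' \<in> X" "0 \<le> u \<and> u \<le> (1::real)"
  with assms have f: "f (\<lambda>e. u * x e + (1 - u) * x' e) = u * f x + (1 - u) * f x'"
    unfolding fun_affine_on_def by blast
  show "c * f (\<lambda>e. u * x e + (1 - u) * x' e) = u * (c * f x) + (1 - u) * (c * f x')"
    unfolding f by (simp add: algebra_simps)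
qed

lemma fun_affine_on_sum:
  "(\<And>i. i \<in> I \<Longrightarrow> fun_affine_on X (f i)) \<Longrightarrow> fun_affine_on X (\<lambda>x. \<Sum>i\<in>I. f i x)"
proof (induction I rule: infinite_finite_induct)
  case (insert i I)
  then show ?case by (simp add: fun_affine_on_add)
qed (simp_all add: fun_affine_on_const)

lemma fun_affine_on_linear: "fun_affine_on X (\<lambda>x. \<Sum>e\<in>F. c e * x e)"
  by (intro fun_affine_on_sum fun_affine_on_cmult fun_affine_on_coordinate)

lemma fun_convex_Int_nonpos:
  assumes "fun_convex X" and "fun_affine_on X f"
  shows "fun_convex (X \<inter> {x. f x \<le> 0})"
  unfolding fun_convex_def
proof (intro ballI allI impI)
  fix x x' u assume x: "x \<in> X \<inter> {x. f x \<le> 0}" "x' \<in> X \<inter> {x. f x \<le> 0}" and u: "0 \<le> u \<and> u \<le> (1::real)"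
  have "f (\<lambda>e. u * x e + (1 - u) * x' e) = u * f x + (1 - u) * f x'"
    using assms(2) x u unfolding fun_affine_on_def by blast
  also have "\<dots> \<le> 0" using x u by (intro add_nonpos_nonpos mult_nonneg_nonpos) auto
  finally show "(\<lambda>e. u * x e + (1 - u) * x' e) \<in> X \<inter> {x. f x \<le> 0}"
    using assms(1) x u unfolding fun_convex_def by blast
qed

lemma convex_affine_pair_image:
  assumes "fun_convex X" and "fun_affine_on X h" and "fun_affine_on X a"
  shows "convex ((\<lambda>x. (h x, a x)) ` X)"
  unfolding convex_alt
proof clarify
  fix x x' and u :: real assume x: "x \<in> X" "x' \<in> X" and u: "0 \<le> u" "u \<le> 1"
  let ?z = "\<lambda>e. u * x' e + (1 - u) * x e"
  have "?z \<in> X" using assms(1) x u unfolding fun_convex_def by simp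
  moreover have "h ?z = u * h x' + (1 - u) * h x" "a ?z = u * a x' + (1 - u) * a x"
    using assms(2,3) x u unfolding fun_affine_on_def by simp_all
  ultimately show "(1 - u) *\<^sub>R (h x, a x) + u *\<^sub>R (h x', a x') \<in> (\<lambda>x. (h x, a x)) ` X"
    by (auto intro!: image_eqI[of _ _ ?z])
qed

lemma approx_lagrange_multiplier_image:
  fixes a h :: "'x \<Rightarrow> real"
  assumes compact: "compact ((\<lambda>x. (h x, a x)) ` X)" and convex: "convex ((\<lambda>x. (h x, a x)) ` X)"
    and feasible: "\<exists>x\<in>X. h x \<le> 0"
    and lower: "\<And>x. x \<in> X \<Longrightarrow> h x \<le> 0 \<Longrightarrow> t \<le> a x"
    and "\<epsilon> > 0"
  shows "\<exists>y\<ge>0. \<forall>x\<in>X. t - \<epsilon> \<le> a x + y * h x"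
proof -
  define A where "A = (\<lambda>x. (h x, a x)) ` X"
  define C where "C = {p::real \<times> real. fst p \<le> 0 \<and> snd p \<le> t - \<epsilon>}"
  have C_halfspaces:
    "C = {p. inner (1::real, 0::real) p \<le> 0} \<inter> {p. inner (0::real, 1::real) p \<le> t - \<epsilon>}"
    unfolding C_def by (auto simp: inner_prod_def)
  have "\<not> (h x \<le> 0 \<and> a x \<le> t - \<epsilon>)" if "x \<in> X" for x
    using lower[OF that] \<open>\<epsilon> > 0\<close> by linarith
  then have "A \<inter> C = {}" unfolding A_def C_def by auto
  have "A \<noteq> {}" using feasible unfolding A_def by auto
  have "convex C" "closed C"
    unfolding C_halfspaces by (intro convex_Int convex_halfspace_le closed_Int closed_halfspace_le)+
  then obtain w \<beta> where wA: "\<forall>p\<in>A. inner w p < \<beta>" and wC: "\<forall>p\<in>C. inner w p > \<beta>"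
    using separating_hyperplane_compact_closed[OF convex[folded A_def] compact[folded A_def] \<open>A \<noteq> {}\<close>]
      \<open>A \<inter> C = {}\<close> by blast
  obtain p q where w: "w = (p, q)" by (cases w)
  have C_side: "p * s + q * (t - \<epsilon> - r) > \<beta>" if "s \<le> 0" "r \<ge> 0" for s r
    using wC that unfolding C_def w by auto
  define M where "M = \<bar>\<beta> - q * (t - \<epsilon>)\<bar> + 1"
  have M: "\<bar>\<beta> - q * (t - \<epsilon>)\<bar> < M" "M > 0" unfolding M_def by simp_all
  have "p \<le> 0"
  proof (rule ccontr)
    assume "\<not> p \<le> 0"
    then have "- M / p \<le> 0" "p * (- M / p) = - M" using M(2) by (simp_all add: divide_nonpos_pos)
    then have "\<beta> < - M + q * (t - \<epsilon>)" using C_side[of "- M / p" 0] by simp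
    with M(1) show False by (simp add: abs_less_iff)
  qed
  have "q \<le> 0"
  proof (rule ccontr)
    assume "\<not> q \<le> 0"
    then have "M / q \<ge> 0" "q * (M / q) = M" using M(2) by simp_all
    then have "\<beta> < q * (t - \<epsilon>) - M" using C_side[of 0 "M / q"] by (simp add: right_diff_distrib)
    with M(1) show False by (simp add: abs_less_iff)
  qed
  obtain x0 where x0: "x0 \<in> X" "h x0 \<le> 0" using feasible by blast
  have A_side: "\<And>x. x \<in> X \<Longrightarrow> p * h x + q * a x < \<beta>"
    using wA unfolding A_def w by auto
  have corner: "q * (t - \<epsilon>) > \<beta>" using C_side[of 0 0] by simp
  \<comment> \<open>Feasibility rules out a vertical separating line; it replaces a Slater point.\<close>
  have "q \<noteq> 0"
  proof
    assume "q = 0"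
    moreover have "p * h x0 \<ge> 0" using \<open>p \<le> 0\<close> x0 by (simp add: mult_nonpos_nonpos)
    ultimately show False using A_side[OF x0(1)] corner by auto
  qed
  with \<open>q \<le> 0\<close> have "q < 0" by simp
  have "t - \<epsilon> \<le> a x + p / q * h x" if "x \<in> X" for x
  proof -
    have "q * (a x + p / q * h x) = p * h x + q * a x" using \<open>q < 0\<close> by (simp add: field_simps)
    also have "\<dots> < q * (t - \<epsilon>)" using A_side[OF that] corner by linarith
    finally show ?thesis using \<open>q < 0\<close> by (simp add: mult_less_cancel_left)
  qed
  moreover have "p / q \<ge> 0" using \<open>p \<le> 0\<close> \<open>q < 0\<close> by (simp add: divide_nonpos_neg)
  ultimately show ?thesis by blast
qed

lemma approx_lagrange_multiplier:
  fixes a h :: "('e \<Rightarrow> real) \<Rightarrow> real"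
  assumes "compact X" and "fun_convex X"
    and "fun_affine_on X a" and "continuous_on X a" and "fun_affine_on X h" and "continuous_on X h"
    and "\<exists>x\<in>X. h x \<le> 0" and "\<And>x. x \<in> X \<Longrightarrow> h x \<le> 0 \<Longrightarrow> t \<le> a x" and "\<epsilon> > 0"
  shows "\<exists>y\<ge>0. \<forall>x\<in>X. t - \<epsilon> \<le> a x + y * h x"
proof (rule approx_lagrange_multiplier_image)
  show "compact ((\<lambda>x. (h x, a x)) ` X)"
    using assms(1,4,6) by (intro compact_continuous_image continuous_on_Pair)
  show "convex ((\<lambda>x. (h x, a x)) ` X)"
    using assms(2,5,3) by (rule convex_affine_pair_image)
qed (use assms in auto)

lemma approx_lagrange_multipliers:
  fixes a :: "('e \<Rightarrow> real) \<Rightarrow> real" and h :: "'i \<Rightarrow> ('e \<Rightarrow> real) \<Rightarrow> real"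
  assumes "finite I" and "compact X" and "fun_convex X"
    and "fun_affine_on X a" and "continuous_on X a"
    and "\<forall>i\<in>I. fun_affine_on X (h i) \<and> continuous_on UNIV (h i)"
    and "\<exists>x\<in>X. \<forall>i\<in>I. h i x \<le> 0"
    and "\<forall>x\<in>X. (\<forall>i\<in>I. h i x \<le> 0) \<longrightarrow> t \<le> a x"
    and "\<epsilon> > 0"
  shows "\<exists>y. (\<forall>i\<in>I. 0 \<le> y i) \<and> (\<forall>x\<in>X. t - \<epsilon> \<le> a x + (\<Sum>i\<in>I. y i * h i x))"
  using assms
proof (induction I arbitrary: X \<epsilon> rule: finite_induct)
  case empty
  then show ?case by auto
next
  case (insert j I)
  have hj: "fun_affine_on X (h j)" "continuous_on UNIV (h j)" using "insert.prems"(5) by auto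
  define X' where "X' = X \<inter> {x. h j x \<le> 0}"
  have X'_sub: "X' \<subseteq> X" unfolding X'_def by blast
  have "compact X'"
    unfolding X'_def using "insert.prems"(1) hj(2)
    by (intro compact_Int_closed closed_Collect_le continuous_intros)
  have "fun_convex X'"
    unfolding X'_def using fun_convex_Int_nonpos[OF "insert.prems"(2) hj(1)] .
  \<comment> \<open>Dualise \<open>I\<close> on the part of \<open>X\<close> where constraint \<open>j\<close> holds, then \<open>j\<close> alone.\<close>
  have "fun_affine_on X' a" "continuous_on X' a"
    using "insert.prems"(3,4) fun_affine_on_subset[OF _ X'_sub] continuous_on_subset[OF _ X'_sub]
    by blast+
  moreover have "\<forall>i\<in>I. fun_affine_on X' (h i) \<and> continuous_on UNIV (h i)"
    using "insert.prems"(5) fun_affine_on_subset[OF _ X'_sub] by blast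
  moreover have "\<exists>x\<in>X'. \<forall>i\<in>I. h i x \<le> 0" "\<forall>x\<in>X'. (\<forall>i\<in>I. h i x \<le> 0) \<longrightarrow> t \<le> a x"
    using "insert.prems"(6,7) unfolding X'_def by auto
  ultimately have "\<exists>y. (\<forall>i\<in>I. 0 \<le> y i) \<and> (\<forall>x\<in>X'. t - \<epsilon>/2 \<le> a x + (\<Sum>i\<in>I. y i * h i x))"
    using "insert.IH"[OF \<open>compact X'\<close> \<open>fun_convex X'\<close>] "insert.prems"(8) by simp
  then obtain y where y: "\<forall>i\<in>I. 0 \<le> y i" "\<forall>x\<in>X'. t - \<epsilon>/2 \<le> a x + (\<Sum>i\<in>I. y i * h i x)"
    by blast
  define a' where "a' x = a x + (\<Sum>i\<in>I. y i * h i x)" for x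
  have cont_h: "continuous_on X (h i)" if "i \<in> insert j I" for i
    using "insert.prems"(5) that continuous_on_subset[OF _ subset_UNIV] by blast
  have "fun_affine_on X a'"
    unfolding a'_def using "insert.prems"(3,5)
    by (intro fun_affine_on_add fun_affine_on_sum fun_affine_on_cmult) auto
  moreover have "continuous_on X a'"
    unfolding a'_def using "insert.prems"(4) cont_h by (intro continuous_intros) auto
  moreover have "t - \<epsilon>/2 \<le> a' x" if "x \<in> X" "h j x \<le> 0" for x
    using y(2) that unfolding X'_def a'_def by auto
  ultimately obtain yj where yj: "yj \<ge> 0" "\<forall>x\<in>X. t - \<epsilon>/2 - \<epsilon>/2 \<le> a' x + yj * h j x"
    using approx_lagrange_multiplier[of X a' "h j" "t - \<epsilon>/2" "\<epsilon>/2"]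
      "insert.prems"(1,2,6,8) hj(1) cont_h[of j] by auto
  have "(\<Sum>i\<in>I. (y(j := yj)) i * h i x) = (\<Sum>i\<in>I. y i * h i x)" for x
    using "insert.hyps"(2) by (intro sum.cong) auto
  then have "(\<Sum>i\<in>insert j I. (y(j := yj)) i * h i x) = yj * h j x + a' x - a x" for x
    using "insert.hyps" unfolding a'_def by simp
  then show ?case
    using yj y(1) by (intro exI[of _ "y(j := yj)"]) auto
qed

text \<open>\<open>P_ST V E\<close> leaves the coordinates outside \<open>E\<close> free, so it is not compact; all data
  only read coordinates in \<open>E\<close>, so nothing is lost by zeroing the others.\<close>

definition zero_outside :: "'e set \<Rightarrow> ('e \<Rightarrow> real) \<Rightarrow> 'e \<Rightarrow> real" where
  "zero_outside E x = (\<lambda>e. if e \<in> E then x e else 0)"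

definition P_ST_supp :: "'v set \<Rightarrow> 'v set set \<Rightarrow> ('v set \<Rightarrow> real) set" where
  "P_ST_supp V E = {x \<in> P_ST V E. \<forall>e. e \<notin> E \<longrightarrow> x e = 0}"

definition lagrangian :: "'v set set \<Rightarrow> ('v set \<Rightarrow> real) \<Rightarrow> 'v set set \<Rightarrow> ('v set \<Rightarrow> int)
    \<Rightarrow> real \<Rightarrow> ('v set \<Rightarrow> real) \<Rightarrow> ('v set \<Rightarrow> real) \<Rightarrow> real" where
  "lagrangian E c \<S> b lam y x =
     lin_cost E c x + (\<Sum>S\<in>\<S>. (sum x (cut_edges E S) - lam * real_of_int (b S)) * y S)"

lemma g_lag_eq_Inf_lagrangian: "g_lag V E c \<S> b lam y = Inf (lagrangian E c \<S> b lam y ` P_ST V E)"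
  unfolding g_lag_def lagrangian_def ..

lemma sum_zero_outside: "F \<subseteq> E \<Longrightarrow> sum (zero_outside E x) F = sum x F"
  unfolding zero_outside_def by (intro sum.cong) auto

lemma inner_edges_subset: "inner_edges E S \<subseteq> E"
  unfolding inner_edges_def by blast

lemma cut_edges_subset: "cut_edges E S \<subseteq> E"
  unfolding cut_edges_def by blast

lemma lagrangian_zero_outside:
  "lagrangian E c \<S> b lam y (zero_outside E x) = lagrangian E c \<S> b lam y x"
  unfolding lagrangian_def lin_cost_def
  by (simp add: sum_zero_outside[OF cut_edges_subset]) (simp add: zero_outside_def)

lemma zero_outside_in_P_ST_supp: "x \<in> P_ST V E \<Longrightarrow> zero_outside E x \<in> P_ST_supp V E"
  unfolding P_ST_supp_def P_ST_def
  by (simp add: sum_zero_outside inner_edges_subset) (simp add: zero_outside_def)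

lemma P_ST_nonneg: "x \<in> P_ST V E \<Longrightarrow> e \<in> E \<Longrightarrow> 0 \<le> x e"
  unfolding P_ST_def by blast

lemma sum_cut_edges_nonneg: "x \<in> P_ST V E \<Longrightarrow> 0 \<le> sum x (cut_edges E S)"
  using P_ST_nonneg cut_edges_subset by (metis subsetD sum_nonneg)

lemma lin_cost_nonneg: "\<forall>e\<in>E. 0 \<le> c e \<Longrightarrow> x \<in> P_ST V E \<Longrightarrow> 0 \<le> lin_cost E c x"
  unfolding lin_cost_def by (auto intro!: sum_nonneg dest: P_ST_nonneg)

lemma compact_P_ST_supp:
  assumes "finite E"
  shows "compact (P_ST_supp V E)"
proof -
  define K where "K = PiE UNIV (\<lambda>e. if e \<in> E then {0..real (card V)} else {0::real})"
  have "compactin (product_topology (\<lambda>_. euclidean) UNIV) K"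
    unfolding K_def compactin_PiE by auto
  then have "compact K" by (simp add: euclidean_product_topology)
  have "x e \<le> real (card V)" if "x \<in> P_ST V E" "e \<in> E" for x e
  proof -
    have "x e \<le> sum x E"
      using that assms by (intro member_le_sum) (auto dest: P_ST_nonneg)
    also have "\<dots> \<le> real (card V)" using that(1) unfolding P_ST_def by auto
    finally show ?thesis .
  qed
  then have "P_ST_supp V E \<subseteq> K"
    unfolding P_ST_supp_def K_def by (auto dest: P_ST_nonneg)
  moreover have "closed (P_ST_supp V E)"
  proof -
    have "P_ST_supp V E = {x. \<forall>e. e \<in> E \<longrightarrow> 0 \<le> x e} \<inter>
       {x. \<forall>S. S \<noteq> {} \<and> S \<subset> V \<longrightarrow> sum x (inner_edges E S) \<le> real (card S) - 1} \<inter>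
       {x. sum x E = real (card V) - 1} \<inter> {x. \<forall>e. e \<notin> E \<longrightarrow> x e = 0}"
      unfolding P_ST_supp_def P_ST_def by auto
    also have "closed \<dots>"
      by (intro closed_Int closed_Collect_all closed_Collect_imp closed_Collect_le closed_Collect_eq
          continuous_intros continuous_on_product_coordinates) auto
    finally show ?thesis .
  qed
  ultimately show ?thesis
    using compact_Int_closed[OF \<open>compact K\<close>] by (metis inf.absorb2)
qed

lemma fun_convex_P_ST_supp: "fun_convex (P_ST_supp V E)"
  unfolding fun_convex_def
proof (intro ballI allI impI)
  fix x x' and u :: real
  assume x: "x \<in> P_ST_supp V E" "x' \<in> P_ST_supp V E" and u: "0 \<le> u \<and> u \<le> 1"
  let ?z = "\<lambda>e. u * x e + (1 - u) * x' e"
  have sum_z: "sum ?z F = u * sum x F + (1 - u) * sum x' F" for F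
    by (simp add: sum.distrib sum_distrib_left)
  have totals: "sum x E = real (card V) - 1" "sum x' E = real (card V) - 1"
    using x unfolding P_ST_supp_def P_ST_def by auto
  have "0 \<le> ?z e" if "e \<in> E" for e
    using x u that unfolding P_ST_supp_def P_ST_def by (simp add: add_nonneg_nonneg)
  moreover have "sum ?z (inner_edges E S) \<le> real (card S) - 1" if "S \<noteq> {}" "S \<subset> V" for S
    unfolding sum_z using x u that unfolding P_ST_supp_def P_ST_def by (intro convex_bound_le) auto
  moreover have "sum ?z E = real (card V) - 1"
    unfolding sum_z totals by (simp add: algebra_simps)
  moreover have "?z e = 0" if "e \<notin> E" for e
    using x that unfolding P_ST_supp_def by simp
  ultimately show "?z \<in> P_ST_supp V E"
    unfolding P_ST_supp_def P_ST_def by blast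
qed

lemma feas_mono:
  assumes "0 < l" and "l \<le> l'"
  shows "feas V E \<S> b l \<subseteq> feas V E \<S> b l'"
proof
  fix x assume x: "x \<in> feas V E \<S> b l"
  have "sum x (cut_edges E S) \<le> l' * real_of_int (b S)" if "S \<in> \<S>" for S
  proof -
    have "0 \<le> l * real_of_int (b S)" "sum x (cut_edges E S) \<le> l * real_of_int (b S)"
      using x that sum_cut_edges_nonneg[of x V E S] unfolding feas_def by auto
    moreover from this(1) \<open>0 < l\<close> have "0 \<le> real_of_int (b S)"
      by (simp add: zero_le_mult_iff)
    ultimately show ?thesis using \<open>l \<le> l'\<close> by (meson mult_right_mono order_trans)
  qed
  then show "x \<in> feas V E \<S> b l'" using x unfolding feas_def by blast
qed

lemma OPT_le_lin_cost:
  assumes "\<forall>e\<in>E. 0 \<le> c e" and "x \<in> feas V E \<S> b lam"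
  shows "OPT V E c \<S> b lam \<le> lin_cost E c x"
  unfolding OPT_def using assms
  by (intro cInf_lower) (auto simp: bdd_below_def feas_def intro: lin_cost_nonneg)

lemma approx_strong_duality:
  assumes "finite E" and "finite \<S>" and "\<forall>e\<in>E. 0 \<le> c e" and "feas V E \<S> b lam \<noteq> {}"
    and "\<epsilon> > 0"
  shows "\<exists>y. (\<forall>S\<in>\<S>. 0 \<le> y S) \<and> OPT V E c \<S> b lam - \<epsilon> \<le> g_lag V E c \<S> b lam y"
proof -
  define h where "h S x = sum x (cut_edges E S) - lam * real_of_int (b S)" for S x
  have affine_h: "fun_affine_on X (h S)" for X S
    unfolding h_def by (intro fun_affine_on_diff fun_affine_on_sum fun_affine_on_coordinate fun_affine_on_const)
  have affine_cost: "fun_affine_on (P_ST_supp V E) (lin_cost E c)"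
    unfolding lin_cost_def by (rule fun_affine_on_linear)
  have "continuous_on UNIV (lin_cost E c)"
    unfolding lin_cost_def by (intro continuous_intros continuous_on_product_coordinates)
  then have cont_cost: "continuous_on (P_ST_supp V E) (lin_cost E c)"
    using continuous_on_subset by blast
  have cont_h: "continuous_on UNIV (h S)" for S
    unfolding h_def by (intro continuous_intros continuous_on_product_coordinates)
  obtain x1 where x1: "x1 \<in> feas V E \<S> b lam" using assms(4) by blast
  then have "zero_outside E x1 \<in> P_ST_supp V E \<and> (\<forall>S\<in>\<S>. h S (zero_outside E x1) \<le> 0)"
    unfolding feas_def h_def by (auto simp: zero_outside_in_P_ST_supp sum_zero_outside[OF cut_edges_subset])
  then have feasible: "\<exists>x\<in>P_ST_supp V E. \<forall>S\<in>\<S>. h S x \<le> 0" by blast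
  have lower: "\<forall>x\<in>P_ST_supp V E. (\<forall>S\<in>\<S>. h S x \<le> 0) \<longrightarrow> OPT V E c \<S> b lam \<le> lin_cost E c x"
    using assms(3) unfolding P_ST_supp_def h_def
    by (auto intro!: OPT_le_lin_cost simp: feas_def)
  obtain y where y: "\<forall>S\<in>\<S>. 0 \<le> y S"
    and bound: "\<forall>x\<in>P_ST_supp V E. OPT V E c \<S> b lam - \<epsilon> \<le> lin_cost E c x + (\<Sum>S\<in>\<S>. y S * h S x)"
    using approx_lagrange_multipliers[OF assms(2) compact_P_ST_supp[OF assms(1)] fun_convex_P_ST_supp
        affine_cost cont_cost _ feasible lower assms(5)] affine_h cont_h
    by blast
  have "OPT V E c \<S> b lam - \<epsilon> \<le> lagrangian E c \<S> b lam y x" if "x \<in> P_ST V E" for x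
  proof -
    have "OPT V E c \<S> b lam - \<epsilon> \<le> lagrangian E c \<S> b lam y (zero_outside E x)"
      using bound zero_outside_in_P_ST_supp[OF that]
      unfolding lagrangian_def h_def by (simp add: mult.commute)
    then show ?thesis by (simp only: lagrangian_zero_outside)
  qed
  then have "OPT V E c \<S> b lam - \<epsilon> \<le> g_lag V E c \<S> b lam y"
    unfolding g_lag_eq_Inf_lagrangian using x1 unfolding feas_def
    by (intro cInf_greatest) auto
  with y show ?thesis by blast
qed

lemma g_lag_le_OPT_one:
  assumes "\<forall>e\<in>E. 0 \<le> c e" and "\<forall>S\<in>\<S>. 0 \<le> y S" and "feas V E \<S> b 1 \<noteq> {}"
  shows "g_lag V E c \<S> b lam y + (lam - 1) * (\<Sum>S\<in>\<S>. real_of_int (b S) * y S) \<le> OPT V E c \<S> b 1"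
proof -
  have "bdd_below (lagrangian E c \<S> b lam y ` P_ST V E)"
  proof (rule bdd_belowI2)
    fix x assume x: "x \<in> P_ST V E"
    have "(\<Sum>S\<in>\<S>. (- lam * real_of_int (b S)) * y S) \<le>
        (\<Sum>S\<in>\<S>. (sum x (cut_edges E S) - lam * real_of_int (b S)) * y S)"
      using sum_cut_edges_nonneg[OF x] assms(2) by (intro sum_mono mult_right_mono) auto
    then show "(\<Sum>S\<in>\<S>. (- lam * real_of_int (b S)) * y S) \<le> lagrangian E c \<S> b lam y x"
      unfolding lagrangian_def using lin_cost_nonneg[OF assms(1) x] by linarith
  qed
  have "g_lag V E c \<S> b lam y + (lam - 1) * (\<Sum>S\<in>\<S>. real_of_int (b S) * y S) \<le> lin_cost E c x"
    if x: "x \<in> feas V E \<S> b 1" for x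
  proof -
    have xP: "x \<in> P_ST V E" using x unfolding feas_def by blast
    have "g_lag V E c \<S> b lam y \<le> lagrangian E c \<S> b lam y x"
      unfolding g_lag_eq_Inf_lagrangian using xP \<open>bdd_below _\<close> by (intro cInf_lower) auto
    also have "\<dots> \<le> lin_cost E c x + (\<Sum>S\<in>\<S>. (real_of_int (b S) - lam * real_of_int (b S)) * y S)"
      unfolding lagrangian_def using x assms(2)
      by (intro add_left_mono sum_mono mult_right_mono) (auto simp: feas_def)
    also have "(\<Sum>S\<in>\<S>. (real_of_int (b S) - lam * real_of_int (b S)) * y S) =
        - ((lam - 1) * (\<Sum>S\<in>\<S>. real_of_int (b S) * y S))"
      by (simp add: sum_distrib_left sum_negf[symmetric] algebra_simps)
    finally show ?thesis by simp
  qed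
  then show ?thesis unfolding OPT_def using assms(3) by (intro cInf_greatest) auto
qed

theorem lemma7:
  fixes V :: "'v set" and E :: "'v set set" and c :: "'v set \<Rightarrow> real"
    and \<S> :: "'v set set" and b :: "'v set \<Rightarrow> int" and lam :: real
    and ystar :: "'v set \<Rightarrow> real"
  assumes "connected_graph V E"
    and "\<forall>e\<in>E. c e \<ge> 0"
    and "is_chain_family V \<S>"
    and "lam > 1"
    and "feas V E \<S> b 1 \<noteq> {}"
    and "\<forall>S\<in>\<S>. ystar S \<ge> 0"
    and "\<forall>y. (\<forall>S\<in>\<S>. y S \<ge> 0) \<longrightarrow> g_lag V E c \<S> b lam y \<le> g_lag V E c \<S> b lam ystar"
  shows "(\<Sum>S\<in>\<S>. real_of_int (b S) * ystar S) \<le> (OPT V E c \<S> b 1 - OPT V E c \<S> b lam) / (lam - 1)"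
proof -
  have "finite V" "E \<subseteq> Pow V" using assms(1) unfolding connected_graph_def graph_ok_def by auto
  then have "finite E" by (simp add: finite_subset)
  have "finite \<S>" using assms(3) unfolding is_chain_family_def by blast
  have "feas V E \<S> b lam \<noteq> {}" using feas_mono[of 1 lam V E \<S> b] assms(4,5) by auto
  define B where "B = (\<Sum>S\<in>\<S>. real_of_int (b S) * ystar S)"
  have "(lam - 1) * B \<le> OPT V E c \<S> b 1 - OPT V E c \<S> b lam + \<epsilon>" if eps: "\<epsilon> > 0" for \<epsilon>
  proof -
    obtain y where "\<forall>S\<in>\<S>. 0 \<le> y S" and "OPT V E c \<S> b lam - \<epsilon> \<le> g_lag V E c \<S> b lam y"
      using approx_strong_duality[OF \<open>finite E\<close> \<open>finite \<S>\<close> assms(2)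
          \<open>feas V E \<S> b lam \<noteq> {}\<close> eps] by blast
    with assms(7) have "OPT V E c \<S> b lam - \<epsilon> \<le> g_lag V E c \<S> b lam ystar" by force
    moreover have "g_lag V E c \<S> b lam ystar + (lam - 1) * B \<le> OPT V E c \<S> b 1"
      unfolding B_def by (rule g_lag_le_OPT_one[OF assms(2,6,5)])
    ultimately show ?thesis by linarith
  qed
  then have "(lam - 1) * B \<le> OPT V E c \<S> b 1 - OPT V E c \<S> b lam"
    by (rule field_le_epsilon)
  then show ?thesis unfolding B_def using assms(4) by (simp add: pos_le_divide_eq mult.commute)
qed

end
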